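(* Let $G_1,G_2$ be finite, noncomplete, nonempty (i.e. having at least one edge), undirected, simple graphs with disjoint vertex sets, and let $n_1=|V(G_1)|$. If $G_1$ is regular, then $\vartheta(G_1\,\mathrm{NS}\,G_2)=n_1+\vartheta(G_2)$ and $\vartheta(G_1\,\mathrm{NNS}\,G_2)=n_1+\vartheta(G_2)$. If moreover $\alpha(G_2)=\vartheta(G_2)$, then $\alpha(G_1\,\mathrm{NS}\,G_2)=n_1+\alpha(G_2)$ and $\alpha(G_1\,\mathrm{NNS}\,G_2)=n_1+\alpha(G_2)$.
   Context: Let $V(G_1)=\{v_1,\dots,v_{n_1}\}$ and let $G_1\vee G_2$ be the disjoint union of $G_1,G_2$ plus all edges between $V(G_1)$ and $V(G_2)$. $G_1\,\mathrm{NS}\,G_2$ is obtained from $G_1\vee G_2$ by adding new vertices $v'_1,\dots,v'_{n_1}$ and joining $v'_i$ to $v_j$ iff $\{v_i,v_j\}\in E(G_1)$. $G_1\,\mathrm{NNS}\,G_2$ is obtained from $G_1\vee G_2$ by adding new vertices $v'_1,\dots,v'_{n_1}$ and joining $v'_i$ to $v_j$, $i\ne j$, iff $\{v_i,v_j\}\notin E(G_1)$. $\alpha$ is the independence number; $\vartheta(G)$ is the Lovász theta function: the maximum of $\mathrm{Tr}(BJ)$ over positive semidefinite $B$ indexed by $V(G)$ with $\mathrm{Tr}B=1$ and $B_{i,j}=0$ for $\{i,j\}\in E(G)$, $J$ the all-ones matrix. *)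

theory Defs
  imports Complex_Main
begin

type_synonym 'a graph = "'a set \<times> 'a set set"

definition verts :: "'a graph \<Rightarrow> 'a set" where "verts G = fst G"
definition edges :: "'a graph \<Rightarrow> 'a set set" where "edges G = snd G"

definition finite_simple_graph :: "'a graph \<Rightarrow> bool" where
  "finite_simple_graph G \<longleftrightarrow> finite (verts G) \<and>
     (\<forall>e\<in>edges G. \<exists>u v. e = {u, v} \<and> u \<noteq> v \<and> u \<in> verts G \<and> v \<in> verts G)"

definition complete_graph :: "'a graph \<Rightarrow> bool" where
  "complete_graph G \<longleftrightarrow> (\<forall>u\<in>verts G. \<forall>v\<in>verts G. u \<noteq> v \<longrightarrow> {u, v} \<in> edges G)"

definition degree :: "'a graph \<Rightarrow> 'a \<Rightarrow> nat" where
  "degree G v = card {u \<in> verts G. {u, v} \<in> edges G}"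

definition regular :: "'a graph \<Rightarrow> bool" where
  "regular G \<longleftrightarrow> (\<exists>k. \<forall>v\<in>verts G. degree G v = k)"

definition independent_set :: "'a graph \<Rightarrow> 'a set \<Rightarrow> bool" where
  "independent_set G S \<longleftrightarrow> S \<subseteq> verts G \<and> (\<forall>u\<in>S. \<forall>v\<in>S. {u, v} \<notin> edges G)"

definition alpha :: "'a graph \<Rightarrow> nat" where
  "alpha G = Max {card S | S. independent_set G S}"

definition psd_on :: "'a set \<Rightarrow> ('a \<Rightarrow> 'a \<Rightarrow> real) \<Rightarrow> bool" where
  "psd_on V B \<longleftrightarrow> (\<forall>i\<in>V. \<forall>j\<in>V. B i j = B j i) \<and>
     (\<forall>x :: 'a \<Rightarrow> real. (\<Sum>i\<in>V. \<Sum>j\<in>V. x i * B i j * x j) \<ge> 0)"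

definition theta_feasible :: "'a graph \<Rightarrow> ('a \<Rightarrow> 'a \<Rightarrow> real) \<Rightarrow> bool" where
  "theta_feasible G B \<longleftrightarrow> psd_on (verts G) B \<and> (\<Sum>i\<in>verts G. B i i) = 1 \<and>
     (\<forall>i\<in>verts G. \<forall>j\<in>verts G. {i, j} \<in> edges G \<longrightarrow> B i j = 0)"

text \<open>Tr(BJ) is the sum of all entries of B. The maximum is attained (compact
  feasible set), so it coincides with the supremum.\<close>

definition lovasz_theta :: "'a graph \<Rightarrow> real" where
  "lovasz_theta G = Sup {(\<Sum>i\<in>verts G. \<Sum>j\<in>verts G. B i j) | B. theta_feasible G B}"

definition graph_join :: "'a graph \<Rightarrow> 'a graph \<Rightarrow> 'a graph" where
  "graph_join G1 G2 = (verts G1 \<union> verts G2,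
     edges G1 \<union> edges G2 \<union> {{u, v} | u v. u \<in> verts G1 \<and> v \<in> verts G2})"

text \<open>NS and NNS: original vertices are tagged Inl, the new vertices v'_i are
  tagged Inr v_i (fresh copies of the vertices of G1).\<close>

definition graph_NS :: "'a graph \<Rightarrow> 'a graph \<Rightarrow> ('a + 'a) graph" where
  "graph_NS G1 G2 = (Inl ` verts (graph_join G1 G2) \<union> Inr ` verts G1,
     (\<lambda>e. Inl ` e) ` edges (graph_join G1 G2) \<union>
     {{Inr u, Inl v} | u v. u \<in> verts G1 \<and> v \<in> verts G1 \<and> {u, v} \<in> edges G1})"

definition graph_NNS :: "'a graph \<Rightarrow> 'a graph \<Rightarrow> ('a + 'a) graph" where
  "graph_NNS G1 G2 = (Inl ` verts (graph_join G1 G2) \<union> Inr ` verts G1,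
     (\<lambda>e. Inl ` e) ` edges (graph_join G1 G2) \<union>
     {{Inr u, Inl v} | u v. u \<in> verts G1 \<and> v \<in> verts G1 \<and> u \<noteq> v \<and> {u, v} \<notin> edges G1})"

end

theory Submission
  imports Defs
begin

text \<open>Write \<open>H\<close> for \<open>G\<^sub>1 NS G\<^sub>2\<close> or \<open>G\<^sub>1 NNS G\<^sub>2\<close> and \<open>V\<^sub>1'\<close> for its new vertices. In both cases
  the edges between \<open>V\<^sub>1\<close> and \<open>V\<^sub>1'\<close> form a \<open>k\<close>-regular bipartite graph with \<open>k > 0\<close> (\<open>k\<close> is the
  degree of \<open>G\<^sub>1\<close>, resp. of its complement), hence a fractional clique cover of \<open>V\<^sub>1 \<union> V\<^sub>1'\<close>
  of weight \<open>n\<^sub>1\<close>. So for a feasible matrix \<open>B\<close> the entries on \<open>V\<^sub>1 \<union> V\<^sub>1'\<close> sum to at most \<open>n\<^sub>1\<close>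
  times the trace of \<open>B\<close> there, those on \<open>V\<^sub>2\<close> to at most \<open>\<vartheta>(G\<^sub>2)\<close> times the trace there, and
  bounding the cross term by a weighted AM-GM inequality gives \<open>\<vartheta>(H) \<le> n\<^sub>1 + \<vartheta>(G\<^sub>2)\<close>.
  Conversely \<open>V\<^sub>1' \<union> V\<^sub>2\<close> induces the disjoint union of an edgeless graph on \<open>n\<^sub>1\<close> vertices and
  \<open>G\<^sub>2\<close>, whose \<open>\<vartheta>\<close> is \<open>n\<^sub>1 + \<vartheta>(G\<^sub>2)\<close>. For \<open>\<alpha>\<close>, \<open>V\<^sub>1'\<close> together with a maximum independent
  set of \<open>G\<^sub>2\<close> is independent in \<open>H\<close>, and \<open>\<alpha>(H) \<le> \<vartheta>(H)\<close> closes the gap when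
  \<open>\<alpha>(G\<^sub>2) = \<vartheta>(G\<^sub>2)\<close>.\<close>

section \<open>Positive semidefinite bilinear forms\<close>

definition bilinear_form :: "'v set \<Rightarrow> ('v \<Rightarrow> 'v \<Rightarrow> real) \<Rightarrow> ('v \<Rightarrow> real) \<Rightarrow> ('v \<Rightarrow> real) \<Rightarrow> real" where
  "bilinear_form V B x y = (\<Sum>i\<in>V. \<Sum>j\<in>V. x i * B i j * y j)"

definition delta :: "'v \<Rightarrow> 'v \<Rightarrow> real" where
  "delta a i = (if i = a then 1 else 0)"

lemma psd_on_bilinear_form_nonneg: "psd_on V B \<Longrightarrow> 0 \<le> bilinear_form V B x x"
  by (simp add: psd_on_def bilinear_form_def)

lemma bilinear_form_commute:
  assumes "psd_on V B"
  shows "bilinear_form V B x y = bilinear_form V B y x"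
proof -
  have sym: "B i j = B j i" if "i \<in> V" "j \<in> V" for i j
    using assms that by (simp add: psd_on_def)
  have "bilinear_form V B x y = (\<Sum>j\<in>V. \<Sum>i\<in>V. x i * B i j * y j)"
    unfolding bilinear_form_def by (rule sum.swap)
  also have "\<dots> = bilinear_form V B y x"
    unfolding bilinear_form_def by (intro sum.cong refl) (simp add: sym mult.commute mult.left_commute)
  finally show ?thesis .
qed

lemma bilinear_form_cong:
  "(\<And>i. i \<in> V \<Longrightarrow> x i = x' i) \<Longrightarrow> (\<And>i. i \<in> V \<Longrightarrow> y i = y' i) \<Longrightarrow>
    bilinear_form V B x y = bilinear_form V B x' y'"
  unfolding bilinear_form_def by (intro sum.cong refl) auto

lemma bilinear_form_lincomb_left:
  "bilinear_form V B (\<lambda>i. a * x i + b * y i) z = a * bilinear_form V B x z + b * bilinear_form V B y z"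
  by (simp add: bilinear_form_def algebra_simps sum.distrib sum_distrib_left)

lemma bilinear_form_lincomb_right:
  "bilinear_form V B z (\<lambda>i. a * x i + b * y i) = a * bilinear_form V B z x + b * bilinear_form V B z y"
  by (simp add: bilinear_form_def algebra_simps sum.distrib sum_distrib_left)

lemma bilinear_form_scale:
  "bilinear_form V B (\<lambda>i. a * x i) (\<lambda>j. b * y j) = a * b * bilinear_form V B x y"
  by (simp add: bilinear_form_def sum_distrib_left algebra_simps)

lemma bilinear_form_indicator:
  assumes "finite V" "S \<subseteq> V"
  shows "bilinear_form V B (\<lambda>i. of_bool (i \<in> S)) (\<lambda>i. of_bool (i \<in> S)) = (\<Sum>i\<in>S. \<Sum>j\<in>S. B i j)"
  using assms by (simp add: bilinear_form_def Int_absorb1 flip: sum_distrib_left)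

lemma bilinear_form_lincomb_square:
  assumes "psd_on V B"
  shows "bilinear_form V B (\<lambda>i. a * x i + b * y i) (\<lambda>i. a * x i + b * y i)
     = a\<^sup>2 * bilinear_form V B x x + 2 * a * b * bilinear_form V B x y + b\<^sup>2 * bilinear_form V B y y"
  using bilinear_form_commute[OF assms, of y x]
  by (simp add: bilinear_form_lincomb_left bilinear_form_lincomb_right power2_eq_square algebra_simps)

lemma bilinear_form_sum_left:
  "finite E \<Longrightarrow> bilinear_form V B (\<lambda>i. \<Sum>e\<in>E. f e i) y = (\<Sum>e\<in>E. bilinear_form V B (f e) y)"
  unfolding bilinear_form_def sum_distrib_right
  by (subst sum.swap) (simp add: sum.swap[of _ E V])

lemma bilinear_form_sum_right:
  "finite E \<Longrightarrow> bilinear_form V B x (\<lambda>j. \<Sum>e\<in>E. f e j) = (\<Sum>e\<in>E. bilinear_form V B x (f e))"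
  unfolding bilinear_form_def sum_distrib_left
  by (subst sum.swap) (simp add: sum.swap[of _ E V])

lemma bilinear_form_delta:
  assumes "finite V" "a \<in> V" "b \<in> V"
  shows "bilinear_form V B (delta a) (delta b) = B a b"
  using assms by (simp add: bilinear_form_def delta_def if_distrib if_distribR sum.If_cases)

lemma bilinear_form_delta_add_square:
  assumes "psd_on V B" "finite V" "a \<in> V" "b \<in> V"
  shows "bilinear_form V B (\<lambda>i. delta a i + delta b i) (\<lambda>i. delta a i + delta b i)
    = B a a + 2 * B a b + B b b"
  using bilinear_form_lincomb_square[OF assms(1), of 1 "delta a" 1 "delta b"] assms(2-4)
  by (simp add: bilinear_form_delta)

lemma bilinear_form_mixed_le:
  assumes "psd_on V B"
  shows "2 * l * bilinear_form V B x y \<le> l\<^sup>2 * bilinear_form V B x x + bilinear_form V B y y"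
  using psd_on_bilinear_form_nonneg[OF assms, of "\<lambda>i. l * x i + (-1) * y i"]
  unfolding bilinear_form_lincomb_square[OF assms] by simp

lemma bilinear_form_cauchy_schwarz:
  assumes "psd_on V B"
  shows "(bilinear_form V B x y)\<^sup>2 \<le> bilinear_form V B x x * bilinear_form V B y y"
proof -
  let ?xx = "bilinear_form V B x x" and ?xy = "bilinear_form V B x y" and ?yy = "bilinear_form V B y y"
  have mixed: "2 * l * ?xy \<le> l\<^sup>2 * ?yy + ?xx" for l
    using bilinear_form_mixed_le[OF assms, of l y x] bilinear_form_commute[OF assms, of x y] by simp
  show ?thesis
  proof (cases "?yy = 0")
    case True
    have "?xy = 0"
    proof (rule ccontr)
      assume "?xy \<noteq> 0"
      then have "2 * ((?xx + 1) / (2 * ?xy)) * ?xy = ?xx + 1" by simp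
      then show False using mixed[of "(?xx + 1) / (2 * ?xy)"] True by simp
    qed
    then show ?thesis using True by simp
  next
    case False
    then have "?yy > 0" using psd_on_bilinear_form_nonneg[OF assms, of y] by simp
    then show ?thesis
      using mixed[of "?xy / ?yy"] by (simp add: field_simps power2_eq_square)
  qed
qed

lemma bilinear_form_add_square_le:
  assumes "psd_on V B" "a > 0" "b > 0"
    and "bilinear_form V B x x \<le> a * s" and "bilinear_form V B y y \<le> b * s'"
  shows "bilinear_form V B (\<lambda>i. x i + y i) (\<lambda>i. x i + y i) \<le> (a + b) * (s + s')"
proof -
  let ?xx = "bilinear_form V B x x" and ?xy = "bilinear_form V B x y" and ?yy = "bilinear_form V B y y"
  have "2 * (b / a) * ?xy \<le> (b / a)\<^sup>2 * ?xx + ?yy"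
    by (rule bilinear_form_mixed_le[OF assms(1)])
  then have "2 * ?xy \<le> (b / a) * ?xx + (a / b) * ?yy"
    using assms(2,3) by (simp add: field_simps power2_eq_square)
  then have "bilinear_form V B (\<lambda>i. 1 * x i + 1 * y i) (\<lambda>i. 1 * x i + 1 * y i)
      \<le> (1 + b / a) * ?xx + (1 + a / b) * ?yy"
    unfolding bilinear_form_lincomb_square[OF assms(1)] by (simp add: algebra_simps)
  also have "\<dots> \<le> (1 + b / a) * (a * s) + (1 + a / b) * (b * s')"
    using assms by (intro add_mono mult_left_mono) simp_all
  also have "\<dots> = (a + b) * (s + s')"
    using assms(2,3) by (simp add: field_simps)
  finally show ?thesis by simp
qed

lemma bilinear_form_sum_square_le:
  assumes "psd_on V B" "finite E"
  shows "bilinear_form V B (\<lambda>i. \<Sum>e\<in>E. f e i) (\<lambda>i. \<Sum>e\<in>E. f e i)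
    \<le> real (card E) * (\<Sum>e\<in>E. bilinear_form V B (f e) (f e))"
proof -
  have "bilinear_form V B (\<lambda>i. \<Sum>e\<in>E. f e i) (\<lambda>i. \<Sum>e\<in>E. f e i)
      = (\<Sum>e\<in>E. \<Sum>e'\<in>E. bilinear_form V B (f e) (f e'))"
    using assms(2) by (simp add: bilinear_form_sum_left bilinear_form_sum_right)
  also have "\<dots> \<le> (\<Sum>e\<in>E. \<Sum>e'\<in>E. (bilinear_form V B (f e) (f e) + bilinear_form V B (f e') (f e')) / 2)"
    using bilinear_form_mixed_le[OF assms(1), of 1] by (intro sum_mono) (simp add: field_simps)
  also have "\<dots> = real (card E) * (\<Sum>e\<in>E. bilinear_form V B (f e) (f e))"
    by (simp add: sum.distrib add_divide_distrib sum_divide_distrib[symmetric] sum_distrib_left[symmetric])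
  finally show ?thesis .
qed

lemma psd_on_diag_nonneg: "psd_on V B \<Longrightarrow> finite V \<Longrightarrow> i \<in> V \<Longrightarrow> 0 \<le> B i i"
  using psd_on_bilinear_form_nonneg[of V B "delta i"] bilinear_form_delta[of V i i B] by simp

lemma psd_on_sum_entries_le:
  assumes "psd_on V B" "finite V" "S \<subseteq> V"
  shows "(\<Sum>i\<in>S. \<Sum>j\<in>S. B i j) \<le> real (card S) * (\<Sum>i\<in>S. B i i)"
proof -
  have "B i j \<le> (B i i + B j j) / 2" if "i \<in> S" "j \<in> S" for i j
    using bilinear_form_mixed_le[OF assms(1), of 1 "delta i" "delta j"] that assms(3)
    by (simp add: bilinear_form_delta[OF assms(2)] subsetD)
  then have "(\<Sum>i\<in>S. \<Sum>j\<in>S. B i j) \<le> (\<Sum>i\<in>S. \<Sum>j\<in>S. (B i i + B j j) / 2)"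
    by (intro sum_mono) simp
  also have "\<dots> = real (card S) * (\<Sum>i\<in>S. B i i)"
    by (simp add: sum.distrib add_divide_distrib sum_divide_distrib[symmetric] sum_distrib_left[symmetric])
  finally show ?thesis .
qed

lemma psd_on_scale:
  assumes "psd_on V B" "0 \<le> c"
  shows "psd_on V (\<lambda>i j. c * B i j)"
proof -
  have "(\<Sum>i\<in>V. \<Sum>j\<in>V. x i * (c * B i j) * x j) = c * bilinear_form V B x x" for x
    by (simp add: bilinear_form_def sum_distrib_left algebra_simps)
  then show ?thesis
    using assms psd_on_bilinear_form_nonneg[OF assms(1)] by (simp add: psd_on_def)
qed

lemma psd_on_compose:
  assumes "psd_on V B" "finite V" "inj_on f U" "f ` U \<subseteq> V"
  shows "psd_on U (\<lambda>u v. B (f u) (f v))"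
  unfolding psd_on_def
proof (intro conjI ballI allI)
  show "B (f u) (f v) = B (f v) (f u)" if "u \<in> U" "v \<in> U" for u v
    using assms(1,4) that by (simp add: psd_on_def image_subset_iff)
  fix x :: "_ \<Rightarrow> real"
  define y where "y w = (if w \<in> f ` U then x (inv_into U f w) else 0)" for w
  have "bilinear_form V B y y = (\<Sum>i\<in>f ` U. \<Sum>j\<in>V. y i * B i j * y j)"
    unfolding bilinear_form_def using assms(2,4) by (intro sum.mono_neutral_right) (auto simp: y_def)
  also have "\<dots> = bilinear_form (f ` U) B y y"
    unfolding bilinear_form_def using assms(2,4)
    by (intro sum.cong refl sum.mono_neutral_right) (auto simp: y_def)
  also have "\<dots> = (\<Sum>u\<in>U. \<Sum>v\<in>U. x u * B (f u) (f v) * x v)"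
    unfolding bilinear_form_def using assms(3) by (simp add: sum.reindex y_def)
  finally show "0 \<le> (\<Sum>u\<in>U. \<Sum>v\<in>U. x u * B (f u) (f v) * x v)"
    using psd_on_bilinear_form_nonneg[OF assms(1), of y] by simp
qed

section \<open>The Lovasz theta function and independent sets\<close>

lemma finite_simple_graph_no_loop: "finite_simple_graph G \<Longrightarrow> {v} \<notin> edges G"
  unfolding finite_simple_graph_def by (metis doubleton_eq_iff insert_absorb2)

lemma finite_simple_graph_edge_verts:
  "finite_simple_graph G \<Longrightarrow> {u, v} \<in> edges G \<Longrightarrow> u \<in> verts G \<and> v \<in> verts G"
  unfolding finite_simple_graph_def by (metis doubleton_eq_iff)

lemma finite_simple_graph_verts_nonempty:
  "finite_simple_graph G \<Longrightarrow> edges G \<noteq> {} \<Longrightarrow> verts G \<noteq> {}"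
  unfolding finite_simple_graph_def by blast

lemma theta_feasible_sum_le_card:
  "finite (verts G) \<Longrightarrow> theta_feasible G B \<Longrightarrow> (\<Sum>i\<in>verts G. \<Sum>j\<in>verts G. B i j) \<le> real (card (verts G))"
  using psd_on_sum_entries_le[of "verts G" B "verts G"] by (simp add: theta_feasible_def)

lemma lovasz_theta_upper:
  assumes "finite (verts G)" "theta_feasible G B"
  shows "(\<Sum>i\<in>verts G. \<Sum>j\<in>verts G. B i j) \<le> lovasz_theta G"
  unfolding lovasz_theta_def
  using assms theta_feasible_sum_le_card[OF assms(1)] by (intro cSup_upper bdd_aboveI) auto

lemma lovasz_theta_least:
  assumes "theta_feasible G B0"
    and "\<And>B. theta_feasible G B \<Longrightarrow> (\<Sum>i\<in>verts G. \<Sum>j\<in>verts G. B i j) \<le> c"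
  shows "lovasz_theta G \<le> c"
  unfolding lovasz_theta_def using assms by (intro cSup_least) auto

lemma sum_entries_le_trace_lovasz_theta:
  assumes "finite (verts G)" "psd_on (verts G) B"
    and "\<And>i j. i \<in> verts G \<Longrightarrow> j \<in> verts G \<Longrightarrow> {i, j} \<in> edges G \<Longrightarrow> B i j = 0"
  shows "(\<Sum>i\<in>verts G. \<Sum>j\<in>verts G. B i j) \<le> lovasz_theta G * (\<Sum>i\<in>verts G. B i i)"
proof -
  let ?V = "verts G"
  define tr where "tr = (\<Sum>i\<in>?V. B i i)"
  have "tr \<ge> 0"
    unfolding tr_def using psd_on_diag_nonneg[OF assms(2,1)] by (simp add: sum_nonneg)
  show ?thesis
  proof (cases "tr = 0")
    case True
    then show ?thesis
      using psd_on_sum_entries_le[OF assms(2,1) order_refl] by (simp add: tr_def)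
  next
    case False
    with \<open>tr \<ge> 0\<close> have "tr > 0" by simp
    have "psd_on ?V (\<lambda>i j. (1 / tr) * B i j)"
      using psd_on_scale[OF assms(2), of "1 / tr"] \<open>tr > 0\<close> by simp
    then have "theta_feasible G (\<lambda>i j. (1 / tr) * B i j)"
      unfolding theta_feasible_def using \<open>tr > 0\<close> assms(3)
      by (simp add: sum_divide_distrib[symmetric] tr_def[symmetric])
    then have "(1 / tr) * (\<Sum>i\<in>?V. \<Sum>j\<in>?V. B i j) \<le> lovasz_theta G"
      using lovasz_theta_upper[OF assms(1)] by (simp add: sum_distrib_left)
    then show ?thesis using \<open>tr > 0\<close> by (simp add: tr_def field_simps)
  qed
qed

lemma theta_feasible_independent_set:
  assumes "finite (verts G)" "independent_set G S" "S \<noteq> {}"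
  defines "B \<equiv> \<lambda>i j. of_bool (i \<in> S) * of_bool (j \<in> S) / real (card S)"
  shows "theta_feasible G B" and "(\<Sum>i\<in>verts G. \<Sum>j\<in>verts G. B i j) = real (card S)"
proof -
  have S: "S \<subseteq> verts G" using assms(2) by (simp add: independent_set_def)
  then have "finite S" using assms(1) finite_subset by blast
  then have card: "real (card S) > 0" using assms(3) by (simp add: card_gt_0_iff)
  have restrict: "(\<Sum>i\<in>verts G. of_bool (i \<in> S) * g i) = (\<Sum>i\<in>S. g i)" for g :: "_ \<Rightarrow> real"
    using assms(1) S by (simp add: Int_absorb1 Int_absorb2)
  have form: "(\<Sum>i\<in>verts G. \<Sum>j\<in>verts G. x i * B i j * x j) = (\<Sum>i\<in>S. x i)\<^sup>2 / real (card S)" for x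
  proof -
    have "x i * B i j * x j = (of_bool (i \<in> S) * x i) * (of_bool (j \<in> S) * x j) / real (card S)" for i j
      by (simp add: B_def)
    then show ?thesis
      by (simp add: power2_eq_square sum_product[symmetric] sum_divide_distrib[symmetric] restrict)
  qed
  show "theta_feasible G B"
    unfolding theta_feasible_def psd_on_def
  proof (intro conjI ballI allI impI)
    show "0 \<le> (\<Sum>i\<in>verts G. \<Sum>j\<in>verts G. x i * B i j * x j)" for x
      unfolding form by simp
    show "(\<Sum>i\<in>verts G. B i i) = 1"
      using card restrict[of "\<lambda>i. of_bool (i \<in> S) / real (card S)"] by (simp add: B_def)
    show "B i j = 0" if "{i, j} \<in> edges G" for i j
      using assms(2) that by (auto simp: B_def independent_set_def)
  qed (simp add: B_def)
  show "(\<Sum>i\<in>verts G. \<Sum>j\<in>verts G. B i j) = real (card S)"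
    using form[of "\<lambda>_. 1"] card by (simp add: power2_eq_square)
qed

lemma card_le_lovasz_theta:
  assumes "finite (verts G)" "independent_set G S" "S \<noteq> {}"
  shows "real (card S) \<le> lovasz_theta G"
  using lovasz_theta_upper[OF assms(1) theta_feasible_independent_set(1)[OF assms]]
    theta_feasible_independent_set(2)[OF assms] by simp

lemma independent_set_singleton:
  "finite_simple_graph G \<Longrightarrow> v \<in> verts G \<Longrightarrow> independent_set G {v}"
  using finite_simple_graph_no_loop[of G v] by (simp add: independent_set_def)

lemma ex_theta_feasible:
  assumes "finite_simple_graph G" "v \<in> verts G"
  obtains B where "theta_feasible G B"
  using theta_feasible_independent_set(1)[OF _ independent_set_singleton[OF assms]] assms(1)
  by (auto simp: finite_simple_graph_def)

lemma one_le_lovasz_theta: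
  assumes "finite_simple_graph G" "v \<in> verts G"
  shows "1 \<le> lovasz_theta G"
  using card_le_lovasz_theta[OF _ independent_set_singleton[OF assms]] assms(1)
  by (simp add: finite_simple_graph_def)

lemma finite_independent_set_cards:
  "finite (verts G) \<Longrightarrow> finite {card S | S. independent_set G S}"
  by (rule finite_subset[of _ "card ` Pow (verts G)"]) (auto simp: independent_set_def)

lemma card_le_alpha: "finite (verts G) \<Longrightarrow> independent_set G S \<Longrightarrow> card S \<le> alpha G"
  unfolding alpha_def by (rule Max_ge[OF finite_independent_set_cards]) auto

lemma alpha_attained:
  assumes "finite (verts G)"
  obtains S where "independent_set G S" "card S = alpha G"
proof -
  have "independent_set G {}" by (simp add: independent_set_def)
  then have "alpha G \<in> {card S | S. independent_set G S}"
    unfolding alpha_def by (intro Max_in finite_independent_set_cards assms) auto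
  then show ?thesis using that by auto
qed

lemma alpha_le_lovasz_theta:
  assumes "finite_simple_graph G" "verts G \<noteq> {}"
  shows "real (alpha G) \<le> lovasz_theta G"
proof -
  have fin: "finite (verts G)" using assms(1) by (simp add: finite_simple_graph_def)
  obtain S where S: "independent_set G S" "card S = alpha G" using alpha_attained[OF fin] .
  show ?thesis
  proof (cases "S = {}")
    case True
    then show ?thesis using S(2) one_le_lovasz_theta[OF assms(1)] assms(2) by fastforce
  next
    case False
    then show ?thesis using card_le_lovasz_theta[OF fin S(1) False] S(2) by simp
  qed
qed

lemma card_non_neighbours:
  assumes "finite_simple_graph G" "v \<in> verts G"
  shows "card {u \<in> verts G. v \<noteq> u \<and> {v, u} \<notin> edges G} = card (verts G) - 1 - degree G v"
proof -
  let ?D = "{u \<in> verts G. {u, v} \<in> edges G}"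
  have fin: "finite (verts G)" using assms(1) by (simp add: finite_simple_graph_def)
  have D: "?D \<subseteq> verts G - {v}" using finite_simple_graph_no_loop[OF assms(1), of v] by auto
  have "{u \<in> verts G. v \<noteq> u \<and> {v, u} \<notin> edges G} = (verts G - {v}) - ?D"
    by (auto simp: insert_commute)
  then show ?thesis
    using D fin assms(2) by (simp add: card_Diff_subset finite_subset degree_def)
qed

section \<open>Joins with a copy of the first graph attached\<close>

definition split_join :: "'a graph \<Rightarrow> 'a graph \<Rightarrow> ('a \<Rightarrow> 'a \<Rightarrow> bool) \<Rightarrow> ('a + 'a) graph" where
  "split_join G1 G2 R = (Inl ` verts (graph_join G1 G2) \<union> Inr ` verts G1,
     (\<lambda>e. Inl ` e) ` edges (graph_join G1 G2) \<union>
     {{Inr u, Inl v} | u v. u \<in> verts G1 \<and> v \<in> verts G1 \<and> R u v})"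

lemma graph_NS_eq_split_join: "graph_NS G1 G2 = split_join G1 G2 (\<lambda>u v. {u, v} \<in> edges G1)"
  by (simp add: graph_NS_def split_join_def)

lemma graph_NNS_eq_split_join:
  "graph_NNS G1 G2 = split_join G1 G2 (\<lambda>u v. u \<noteq> v \<and> {u, v} \<notin> edges G1)"
  by (simp add: graph_NNS_def split_join_def)

lemma verts_split_join: "verts (split_join G1 G2 R) = Inl ` (verts G1 \<union> verts G2) \<union> Inr ` verts G1"
  by (simp add: split_join_def graph_join_def verts_def)

lemma Inr_Inr_notin_edges_split_join: "{Inr i, Inr j} \<notin> edges (split_join G1 G2 R)"
  by (auto simp: split_join_def edges_def doubleton_eq_iff)

lemma Inl_Inr_in_edges_split_join:
  "{Inl u, Inr j} \<in> edges (split_join G1 G2 R) \<longleftrightarrow> u \<in> verts G1 \<and> j \<in> verts G1 \<and> R j u"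
  by (auto simp: split_join_def edges_def doubleton_eq_iff)

lemma Inl_Inl_in_edges_split_join:
  assumes "finite_simple_graph G1" "verts G1 \<inter> verts G2 = {}" "u \<in> verts G2" "v \<in> verts G2"
  shows "{Inl u, Inl v} \<in> edges (split_join G1 G2 R) \<longleftrightarrow> {u, v} \<in> edges G2"
proof -
  have Inl_image: "{Inl u, Inl v} \<in> (\<lambda>e. Inl ` e) ` E \<longleftrightarrow> {u, v} \<in> E" for E :: "'a set set"
    using inj_image_mem_iff[OF inj_on_image[OF inj_on_subset[OF inj_Inl]], of UNIV "{u, v}"] by simp
  have "{Inl u, Inl v} \<in> edges (split_join G1 G2 R) \<longleftrightarrow> {u, v} \<in> edges (graph_join G1 G2)"
    by (auto simp: split_join_def edges_def doubleton_eq_iff Inl_image)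
  also have "\<dots> \<longleftrightarrow> {u, v} \<in> edges G2"
    using assms finite_simple_graph_edge_verts[OF assms(1), of u v]
    by (auto simp: graph_join_def edges_def verts_def doubleton_eq_iff)
  finally show ?thesis .
qed

lemma finite_simple_graph_join:
  assumes "finite_simple_graph G1" "finite_simple_graph G2" "verts G1 \<inter> verts G2 = {}"
  shows "finite_simple_graph (graph_join G1 G2)"
  using assms unfolding finite_simple_graph_def graph_join_def verts_def edges_def
  by (auto 0 4)

lemma finite_simple_graph_split_join:
  assumes "finite_simple_graph G1" "finite_simple_graph G2" "verts G1 \<inter> verts G2 = {}"
  shows "finite_simple_graph (split_join G1 G2 R)"
  unfolding finite_simple_graph_def
proof (intro conjI ballI)
  show "finite (verts (split_join G1 G2 R))"
    using assms(1,2) by (simp add: verts_split_join finite_simple_graph_def)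
  fix e assume "e \<in> edges (split_join G1 G2 R)"
  then consider (join) e' where "e' \<in> edges (graph_join G1 G2)" "e = Inl ` e'"
    | (copy) u v where "e = {Inr u, Inl v}" "u \<in> verts G1" "v \<in> verts G1"
    by (auto simp: split_join_def edges_def)
  then show "\<exists>u v. e = {u, v} \<and> u \<noteq> v \<and> u \<in> verts (split_join G1 G2 R) \<and> v \<in> verts (split_join G1 G2 R)"
  proof cases
    case join
    then obtain u v where uv: "e' = {u, v}" "u \<noteq> v" "u \<in> verts (graph_join G1 G2)" "v \<in> verts (graph_join G1 G2)"
      using finite_simple_graph_join[OF assms] by (auto simp: finite_simple_graph_def)
    then have "e = {Inl u, Inl v}" using join(2) by simp
    with uv(2-4) show ?thesis
      by (intro exI[of _ "Inl u"] exI[of _ "Inl v"]) (simp add: split_join_def verts_def)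
  next
    case copy
    then show ?thesis by (auto simp: verts_split_join)
  qed
qed

locale regular_split_join =
  fixes G1 G2 :: "'a graph" and R :: "'a \<Rightarrow> 'a \<Rightarrow> bool" and k :: nat
  assumes simple1: "finite_simple_graph G1" and simple2: "finite_simple_graph G2"
    and disjoint: "verts G1 \<inter> verts G2 = {}"
    and nonempty1: "verts G1 \<noteq> {}" and nonempty2: "verts G2 \<noteq> {}"
    and R_sym: "\<And>i j. i \<in> verts G1 \<Longrightarrow> j \<in> verts G1 \<Longrightarrow> R i j \<Longrightarrow> R j i"
    and R_regular: "\<And>i. i \<in> verts G1 \<Longrightarrow> card {j \<in> verts G1. R i j} = k"
    and k_pos: "0 < k"
begin

abbreviation "V1 \<equiv> verts G1"
abbreviation "V2 \<equiv> verts G2"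
abbreviation "n1 \<equiv> card V1"
abbreviation "H \<equiv> split_join G1 G2 R"

lemma finite_V1: "finite V1" using simple1 by (simp add: finite_simple_graph_def)
lemma finite_V2: "finite V2" using simple2 by (simp add: finite_simple_graph_def)
lemma finite_verts_H: "finite (verts H)" by (simp add: verts_split_join finite_V1 finite_V2)
lemma n1_pos: "0 < n1" using finite_V1 nonempty1 by (simp add: card_gt_0_iff)
lemma notin_V2 [simp]: "v \<in> V1 \<Longrightarrow> v \<notin> V2" using disjoint by blast

lemma sum_verts_H:
  "(\<Sum>w\<in>verts H. g w) = (\<Sum>i\<in>V1. g (Inl i) + g (Inr i)) + (\<Sum>v\<in>V2. g (Inl v))"
proof -
  have "verts H = (Inl ` V1 \<union> Inr ` V1) \<union> Inl ` V2" by (auto simp: verts_split_join)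
  moreover have "(Inl ` V1 \<union> Inr ` V1) \<inter> Inl ` V2 = {}" "Inl ` V1 \<inter> Inr ` V1 = {}" by auto
  ultimately show ?thesis
    using finite_V1 finite_V2
    by (simp add: sum.union_disjoint sum.reindex sum.distrib)
qed

abbreviation "R_pairs \<equiv> {(i, j). i \<in> V1 \<and> j \<in> V1 \<and> R i j}"

lemma finite_R_pairs: "finite R_pairs"
  by (rule finite_subset[of _ "V1 \<times> V1"]) (auto simp: finite_V1)

lemma sum_R_pairs_fst: "(\<Sum>e\<in>R_pairs. h (fst e)) = real k * (\<Sum>i\<in>V1. h i)"
proof -
  have "R_pairs = Sigma V1 (\<lambda>i. {j \<in> V1. R i j})" by auto
  then have "(\<Sum>e\<in>R_pairs. h (fst e)) = (\<Sum>i\<in>V1. \<Sum>j\<in>{j \<in> V1. R i j}. h i)"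
    by (simp only:) (subst sum.Sigma, auto simp: finite_V1 split_def)
  also have "\<dots> = (\<Sum>i\<in>V1. real k * h i)"
    by (intro sum.cong refl) (simp add: R_regular)
  finally show ?thesis by (simp add: sum_distrib_left)
qed

lemma sum_R_pairs_snd: "(\<Sum>e\<in>R_pairs. h (snd e)) = real k * (\<Sum>i\<in>V1. h i)"
proof -
  have swap: "prod.swap ` R_pairs = R_pairs" using R_sym by force
  have "(\<Sum>e\<in>R_pairs. h (snd e)) = (\<Sum>e\<in>prod.swap ` R_pairs. h (fst e))"
    using sum.reindex[of prod.swap R_pairs "\<lambda>e. h (fst e)"] by simp
  then show ?thesis unfolding swap sum_R_pairs_fst .
qed

text \<open>The pairs \<open>{Inl i, Inr j}\<close> with \<open>R i j\<close> are edges of \<open>H\<close> covering every vertex of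
  \<open>Inl ` V1 \<union> Inr ` V1\<close> exactly \<open>k\<close> times, so they form a fractional clique cover of
  weight \<open>n1\<close> of that part.\<close>

lemma sum_R_pairs_delta:
  "(\<Sum>e\<in>R_pairs. delta (Inl (fst e)) w + delta (Inr (snd e)) w) = real k * of_bool (w \<in> Inl ` V1 \<union> Inr ` V1)"
proof -
  have "(\<Sum>e\<in>R_pairs. delta (Inl (fst e)) w + delta (Inr (snd e)) w)
      = real k * ((\<Sum>i\<in>V1. delta (Inl i) w) + (\<Sum>i\<in>V1. delta (Inr i) w))"
    by (simp add: sum.distrib distrib_left
        sum_R_pairs_fst[of "\<lambda>i. delta (Inl i) w"] sum_R_pairs_snd[of "\<lambda>i. delta (Inr i) w"])
  then show ?thesis
    by (cases w) (auto simp: delta_def finite_V1)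
qed

lemma sum_entries_V1_part_le:
  assumes feasible: "theta_feasible H B"
  defines "P \<equiv> Inl ` V1 \<union> Inr ` V1"
  shows "(\<Sum>w\<in>P. \<Sum>w'\<in>P. B w w') \<le> real n1 * (\<Sum>i\<in>V1. B (Inl i) (Inl i) + B (Inr i) (Inr i))"
proof -
  let ?W = "verts H" and ?tr = "\<Sum>i\<in>V1. B (Inl i) (Inl i) + B (Inr i) (Inr i)"
  have psd: "psd_on ?W B" using feasible by (simp add: theta_feasible_def)
  define f where "f e = (\<lambda>w. delta (Inl (fst e)) w + delta (Inr (snd e)) w)" for e :: "'a \<times> 'a"
  have f_square: "bilinear_form ?W B (f e) (f e) = B (Inl i) (Inl i) + B (Inr j) (Inr j)"
    if "e = (i, j)" "e \<in> R_pairs" for e i j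
  proof -
    have "{Inl i, Inr j} \<in> edges H" using that R_sym by (simp add: Inl_Inr_in_edges_split_join)
    moreover have "Inl i \<in> ?W" "Inr j \<in> ?W" using that by (auto simp: verts_split_join)
    ultimately show ?thesis
      using feasible bilinear_form_delta_add_square[OF psd finite_verts_H]
      by (simp add: f_def that(1) theta_feasible_def)
  qed
  have "P \<subseteq> ?W" by (auto simp: P_def verts_split_join)
  then have "real k ^ 2 * (\<Sum>w\<in>P. \<Sum>w'\<in>P. B w w')
      = bilinear_form ?W B (\<lambda>w. real k * of_bool (w \<in> P)) (\<lambda>w. real k * of_bool (w \<in> P))"
    by (simp add: bilinear_form_scale bilinear_form_indicator[OF finite_verts_H] power2_eq_square)
  also have "\<dots> = bilinear_form ?W B (\<lambda>w. \<Sum>e\<in>R_pairs. f e w) (\<lambda>w. \<Sum>e\<in>R_pairs. f e w)"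
    by (simp add: f_def sum_R_pairs_delta P_def)
  also have "\<dots> \<le> real (card R_pairs) * (\<Sum>e\<in>R_pairs. bilinear_form ?W B (f e) (f e))"
    by (rule bilinear_form_sum_square_le[OF psd finite_R_pairs])
  also have "(\<Sum>e\<in>R_pairs. bilinear_form ?W B (f e) (f e))
      = (\<Sum>e\<in>R_pairs. B (Inl (fst e)) (Inl (fst e)) + B (Inr (snd e)) (Inr (snd e)))"
    using f_square by (intro sum.cong refl) auto
  also have "\<dots> = real k * ?tr"
    by (simp add: sum.distrib distrib_left sum_R_pairs_fst[of "\<lambda>i. B (Inl i) (Inl i)"]
        sum_R_pairs_snd[of "\<lambda>i. B (Inr i) (Inr i)"])
  also have "real (card R_pairs) = real n1 * real k"
    using sum_R_pairs_fst[of "\<lambda>_. 1"] by simp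
  finally have "real k ^ 2 * (\<Sum>w\<in>P. \<Sum>w'\<in>P. B w w') \<le> real k ^ 2 * (real n1 * ?tr)"
    by (simp add: power2_eq_square algebra_simps)
  then show ?thesis using k_pos by simp
qed

lemma sum_entries_V2_part_le:
  assumes feasible: "theta_feasible H B"
  shows "(\<Sum>u\<in>V2. \<Sum>v\<in>V2. B (Inl u) (Inl v)) \<le> lovasz_theta G2 * (\<Sum>v\<in>V2. B (Inl v) (Inl v))"
proof -
  have "psd_on (verts H) B" using feasible by (simp add: theta_feasible_def)
  moreover have "Inl ` V2 \<subseteq> verts H" by (auto simp: verts_split_join)
  ultimately have "psd_on V2 (\<lambda>u v. B (Inl u) (Inl v))"
    using psd_on_compose[of "verts H" B Inl V2] finite_verts_H by simp
  moreover have "B (Inl u) (Inl v) = 0" if "u \<in> V2" "v \<in> V2" "{u, v} \<in> edges G2" for u v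
    using feasible that Inl_Inl_in_edges_split_join[OF simple1 disjoint that(1,2)]
    by (simp add: theta_feasible_def verts_split_join)
  ultimately show ?thesis
    by (rule sum_entries_le_trace_lovasz_theta[OF finite_V2])
qed

lemma theta_feasible_sum_entries_le:
  assumes feasible: "theta_feasible H B"
  shows "(\<Sum>w\<in>verts H. \<Sum>w'\<in>verts H. B w w') \<le> real n1 + lovasz_theta G2"
proof -
  let ?W = "verts H" and ?P = "Inl ` V1 \<union> Inr ` V1" and ?Z = "Inl ` V2"
  have psd: "psd_on ?W B" using feasible by (simp add: theta_feasible_def)
  have "1 \<le> lovasz_theta G2" using nonempty2 one_le_lovasz_theta[OF simple2] by blast
  have "?P \<subseteq> ?W" "?Z \<subseteq> ?W" by (auto simp: verts_split_join)
  have P_part: "bilinear_form ?W B (\<lambda>w. of_bool (w \<in> ?P)) (\<lambda>w. of_bool (w \<in> ?P))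
      \<le> real n1 * (\<Sum>i\<in>V1. B (Inl i) (Inl i) + B (Inr i) (Inr i))"
    unfolding bilinear_form_indicator[OF finite_verts_H \<open>?P \<subseteq> ?W\<close>]
    by (rule sum_entries_V1_part_le[OF feasible])
  have Z_part: "bilinear_form ?W B (\<lambda>w. of_bool (w \<in> ?Z)) (\<lambda>w. of_bool (w \<in> ?Z))
      \<le> lovasz_theta G2 * (\<Sum>v\<in>V2. B (Inl v) (Inl v))"
    unfolding bilinear_form_indicator[OF finite_verts_H \<open>?Z \<subseteq> ?W\<close>]
    using sum_entries_V2_part_le[OF feasible] by (simp add: sum.reindex)
  have "(\<Sum>w\<in>?W. \<Sum>w'\<in>?W. B w w') = bilinear_form ?W B (\<lambda>_. 1) (\<lambda>_. 1)"
    by (simp add: bilinear_form_def)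
  also have "\<dots> = bilinear_form ?W B (\<lambda>w. of_bool (w \<in> ?P) + of_bool (w \<in> ?Z))
      (\<lambda>w. of_bool (w \<in> ?P) + of_bool (w \<in> ?Z))"
    by (rule bilinear_form_cong) (auto simp: verts_split_join)
  also have "\<dots> \<le> (real n1 + lovasz_theta G2)
      * ((\<Sum>i\<in>V1. B (Inl i) (Inl i) + B (Inr i) (Inr i)) + (\<Sum>v\<in>V2. B (Inl v) (Inl v)))"
    using \<open>1 \<le> lovasz_theta G2\<close> n1_pos by (intro bilinear_form_add_square_le[OF psd _ _ P_part Z_part]) auto
  also have "\<dots> = (real n1 + lovasz_theta G2) * (\<Sum>w\<in>?W. B w w)"
    by (simp add: sum_verts_H)
  finally show ?thesis using feasible by (simp add: theta_feasible_def)
qed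

text \<open>Scaled by \<open>1 / (n1 + t)\<close>, with \<open>t\<close> the value of a feasible matrix \<open>B1\<close> of \<open>G2\<close>, this is the
  usual optimal matrix for the disjoint union of \<open>G2\<close> with the edgeless graph on \<open>Inr ` V1\<close>,
  an induced subgraph of \<open>H\<close>; it has value \<open>n1 + t\<close>.\<close>

definition lift_matrix :: "('a \<Rightarrow> 'a \<Rightarrow> real) \<Rightarrow> real \<Rightarrow> 'a + 'a \<Rightarrow> 'a + 'a \<Rightarrow> real" where
  "lift_matrix B1 t w w' = (case (w, w') of
       (Inl u, Inl v) \<Rightarrow> if u \<in> V2 \<and> v \<in> V2 then t * B1 u v else 0
     | (Inl u, Inr _) \<Rightarrow> if u \<in> V2 then (\<Sum>v\<in>V2. B1 u v) else 0
     | (Inr _, Inl v) \<Rightarrow> if v \<in> V2 then (\<Sum>u\<in>V2. B1 u v) else 0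
     | (Inr _, Inr _) \<Rightarrow> 1)"

lemma lift_matrix_form:
  fixes x :: "'a + 'a \<Rightarrow> real"
  defines "X \<equiv> \<Sum>i\<in>V1. x (Inr i)" and "y \<equiv> \<lambda>u. x (Inl u)"
  shows "(\<Sum>w\<in>verts H. \<Sum>w'\<in>verts H. x w * lift_matrix B1 t w w' * x w')
    = X\<^sup>2 + X * bilinear_form V2 B1 y (\<lambda>_. 1) + X * bilinear_form V2 B1 (\<lambda>_. 1) y
      + t * bilinear_form V2 B1 y y"
proof -
  let ?M = "lift_matrix B1 t"
  have row_Inr: "(\<Sum>w'\<in>verts H. ?M (Inr i) w' * x w') = X + bilinear_form V2 B1 (\<lambda>_. 1) y" for i
    by (simp add: sum_verts_H lift_matrix_def X_def y_def bilinear_form_def sum_distrib_right)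
      (rule sum.swap)
  have row_Inl: "(\<Sum>w'\<in>verts H. ?M (Inl u) w' * x w')
      = (\<Sum>v\<in>V2. B1 u v) * X + t * (\<Sum>v\<in>V2. B1 u v * y v)" if "u \<in> V2" for u
    using that by (simp add: sum_verts_H lift_matrix_def X_def y_def sum_distrib_left mult.assoc)
  have row_V1: "(\<Sum>w'\<in>verts H. ?M (Inl u) w' * x w') = 0" if "u \<in> V1" for u
    using that by (simp add: sum_verts_H lift_matrix_def)
  have "(\<Sum>w\<in>verts H. \<Sum>w'\<in>verts H. x w * ?M w w' * x w') = (\<Sum>w\<in>verts H. x w * (\<Sum>w'\<in>verts H. ?M w w' * x w'))"
    by (simp add: sum_distrib_left mult.assoc)
  also have "\<dots> = X * (X + bilinear_form V2 B1 (\<lambda>_. 1) y)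
      + (\<Sum>u\<in>V2. y u * ((\<Sum>v\<in>V2. B1 u v) * X + t * (\<Sum>v\<in>V2. B1 u v * y v)))"
    unfolding sum_verts_H[of "\<lambda>w. x w * (\<Sum>w'\<in>verts H. ?M w w' * x w')"]
    by (simp add: row_Inr row_Inl row_V1 X_def y_def sum_distrib_right cong: sum.cong)
  finally show ?thesis
    by (simp add: bilinear_form_def power2_eq_square algebra_simps sum.distrib sum_distrib_left)
qed

lemma psd_on_lift_matrix:
  assumes psd1: "psd_on V2 B1"
  defines "t \<equiv> \<Sum>u\<in>V2. \<Sum>v\<in>V2. B1 u v"
  shows "psd_on (verts H) (lift_matrix B1 t)"
  unfolding psd_on_def
proof (intro conjI ballI allI)
  show "lift_matrix B1 t w w' = lift_matrix B1 t w' w" for w w'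
    using psd1 by (auto simp: lift_matrix_def psd_on_def split: sum.split)
  fix x :: "'a + 'a \<Rightarrow> real"
  define X where "X = (\<Sum>i\<in>V1. x (Inr i))"
  define y where "y u = x (Inl u)" for u
  define Y where "Y = bilinear_form V2 B1 y (\<lambda>_. 1)"
  have "t = bilinear_form V2 B1 (\<lambda>_. 1) (\<lambda>_. 1)" by (simp add: t_def bilinear_form_def)
  then have "Y\<^sup>2 \<le> bilinear_form V2 B1 y y * t"
    unfolding Y_def by (simp add: bilinear_form_cauchy_schwarz[OF psd1])
  then have "0 \<le> (X + Y)\<^sup>2 + (t * bilinear_form V2 B1 y y - Y\<^sup>2)"
    by (simp add: mult.commute)
  also have "\<dots> = (\<Sum>w\<in>verts H. \<Sum>w'\<in>verts H. x w * lift_matrix B1 t w w' * x w')"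
    unfolding lift_matrix_form X_def[symmetric] y_def[symmetric] bilinear_form_commute[OF psd1, of "\<lambda>_. 1"]
    by (simp add: Y_def power2_eq_square algebra_simps)
  finally show "0 \<le> (\<Sum>w\<in>verts H. \<Sum>w'\<in>verts H. x w * lift_matrix B1 t w w' * x w')" .
qed

lemma theta_feasible_lift_matrix:
  assumes feasible1: "theta_feasible G2 B1"
  defines "t \<equiv> \<Sum>u\<in>V2. \<Sum>v\<in>V2. B1 u v"
  defines "B \<equiv> \<lambda>w w'. 1 / (real n1 + t) * lift_matrix B1 t w w'"
  shows "theta_feasible H B" and "(\<Sum>w\<in>verts H. \<Sum>w'\<in>verts H. B w w') = real n1 + t"
proof -
  have psd1: "psd_on V2 B1" using feasible1 by (simp add: theta_feasible_def)
  have "0 \<le> t"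
    using psd_on_bilinear_form_nonneg[OF psd1, of "\<lambda>_. 1"] by (simp add: t_def bilinear_form_def)
  then have pos: "0 < real n1 + t" using n1_pos by simp
  show "theta_feasible H B"
    unfolding theta_feasible_def
  proof (intro conjI ballI impI)
    have "0 \<le> 1 / (real n1 + t)" using pos by simp
    then show "psd_on (verts H) B"
      unfolding B_def t_def by (rule psd_on_scale[OF psd_on_lift_matrix[OF psd1]])
    have "(\<Sum>w\<in>verts H. lift_matrix B1 t w w) = real n1 + t"
      using feasible1 by (simp add: sum_verts_H lift_matrix_def theta_feasible_def flip: sum_distrib_left)
    then show "(\<Sum>w\<in>verts H. B w w) = 1"
      using pos by (simp add: B_def flip: sum_divide_distrib)
    fix w w' assume "w \<in> verts H" "w' \<in> verts H" "{w, w'} \<in> edges H"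
    then show "B w w' = 0"
      using feasible1 Inl_Inl_in_edges_split_join[OF simple1 disjoint]
      by (auto simp: B_def lift_matrix_def theta_feasible_def verts_split_join insert_commute
          Inl_Inr_in_edges_split_join Inr_Inr_notin_edges_split_join split: sum.splits)
  qed
  have "(\<Sum>w\<in>verts H. \<Sum>w'\<in>verts H. lift_matrix B1 t w w') = (real n1 + t)\<^sup>2"
    using lift_matrix_form[of "\<lambda>_. 1" B1 t]
    by (simp add: bilinear_form_def t_def power2_eq_square algebra_simps)
  then show "(\<Sum>w\<in>verts H. \<Sum>w'\<in>verts H. B w w') = real n1 + t"
    using pos by (simp add: B_def power2_eq_square flip: sum_divide_distrib)
qed

lemma lovasz_theta_split_join: "lovasz_theta H = real n1 + lovasz_theta G2"
proof (rule antisym)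
  obtain B0 where B0: "theta_feasible G2 B0"
    using ex_theta_feasible[OF simple2] nonempty2 by blast
  show "lovasz_theta H \<le> real n1 + lovasz_theta G2"
    by (rule lovasz_theta_least[OF theta_feasible_lift_matrix(1)[OF B0] theta_feasible_sum_entries_le])
  have "lovasz_theta G2 \<le> lovasz_theta H - real n1"
  proof (rule lovasz_theta_least[OF B0])
    fix B1 assume "theta_feasible G2 B1"
    then show "(\<Sum>u\<in>V2. \<Sum>v\<in>V2. B1 u v) \<le> lovasz_theta H - real n1"
      using lovasz_theta_upper[OF finite_verts_H theta_feasible_lift_matrix(1)] theta_feasible_lift_matrix(2)
      by fastforce
  qed
  then show "real n1 + lovasz_theta G2 \<le> lovasz_theta H" by simp
qed

lemma independent_set_split_join:
  assumes "independent_set G2 S"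
  shows "independent_set H (Inr ` V1 \<union> Inl ` S)"
proof -
  have "S \<subseteq> V2" using assms by (simp add: independent_set_def)
  have "{Inl u, Inl v} \<notin> edges H" if "u \<in> S" "v \<in> S" for u v
    using that assms \<open>S \<subseteq> V2\<close> Inl_Inl_in_edges_split_join[OF simple1 disjoint, of u v R]
    by (auto simp: independent_set_def)
  then show ?thesis
    using \<open>S \<subseteq> V2\<close>
    by (auto simp: independent_set_def verts_split_join insert_commute
        Inl_Inr_in_edges_split_join Inr_Inr_notin_edges_split_join)
qed

lemma alpha_split_join:
  assumes "real (alpha G2) = lovasz_theta G2"
  shows "alpha H = n1 + alpha G2"
proof (rule antisym)
  have "real (alpha H) \<le> lovasz_theta H"
    using alpha_le_lovasz_theta[OF finite_simple_graph_split_join[OF simple1 simple2 disjoint]]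
      nonempty1 by (simp add: verts_split_join)
  then show "alpha H \<le> n1 + alpha G2"
    using assms lovasz_theta_split_join by simp
  obtain S where S: "independent_set G2 S" "card S = alpha G2"
    using alpha_attained[OF finite_V2] .
  then have "finite S" using finite_V2 by (auto simp: independent_set_def intro: finite_subset)
  then have "card (Inr ` V1 \<union> Inl ` S :: ('a + 'a) set) = n1 + alpha G2"
    using finite_V1 S(2) by (subst card_Un_disjoint) (auto simp: card_image)
  then show "n1 + alpha G2 \<le> alpha H"
    using card_le_alpha[OF finite_verts_H independent_set_split_join[OF S(1)]] by simp
qed

end

lemma regular_split_join_neighbours:
  assumes "finite_simple_graph G1" "finite_simple_graph G2" "verts G1 \<inter> verts G2 = {}"
    and "edges G1 \<noteq> {}" "edges G2 \<noteq> {}" and degree: "\<forall>v\<in>verts G1. degree G1 v = k"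
  shows "regular_split_join G1 G2 (\<lambda>u v. {u, v} \<in> edges G1) k"
proof
  show "verts G1 \<noteq> {}" "verts G2 \<noteq> {}"
    using assms finite_simple_graph_verts_nonempty by blast+
  show card: "card {j \<in> verts G1. {i, j} \<in> edges G1} = k" if "i \<in> verts G1" for i
  proof -
    have "{j \<in> verts G1. {i, j} \<in> edges G1} = {j \<in> verts G1. {j, i} \<in> edges G1}"
      by (auto simp: insert_commute)
    then show ?thesis using degree that by (simp add: degree_def)
  qed
  obtain u v where "{u, v} \<in> edges G1"
    using assms(1,4) by (force simp: finite_simple_graph_def)
  then have "v \<in> {j \<in> verts G1. {u, j} \<in> edges G1}" "u \<in> verts G1"
    using finite_simple_graph_edge_verts[OF assms(1)] by auto
  moreover have "finite {j \<in> verts G1. {u, j} \<in> edges G1}"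
    using assms(1) by (simp add: finite_simple_graph_def)
  ultimately have "0 < card {j \<in> verts G1. {u, j} \<in> edges G1}"
    by (auto simp: card_gt_0_iff)
  then show "0 < k" using card[OF \<open>u \<in> verts G1\<close>] by simp
  show "{j, i} \<in> edges G1" if "{i, j} \<in> edges G1" for i j
    using that by (simp add: insert_commute)
qed (use assms in simp_all)

lemma regular_split_join_non_neighbours:
  assumes "finite_simple_graph G1" "finite_simple_graph G2" "verts G1 \<inter> verts G2 = {}"
    and "\<not> complete_graph G1" "edges G2 \<noteq> {}" and degree: "\<forall>v\<in>verts G1. degree G1 v = k"
  shows "regular_split_join G1 G2 (\<lambda>u v. u \<noteq> v \<and> {u, v} \<notin> edges G1) (card (verts G1) - 1 - k)"
proof
  obtain u v where uv: "u \<in> verts G1" "v \<in> verts G1" "u \<noteq> v" "{u, v} \<notin> edges G1"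
    using assms(4) by (auto simp: complete_graph_def)
  then show "verts G1 \<noteq> {}" by blast
  show "verts G2 \<noteq> {}" using assms(2,5) finite_simple_graph_verts_nonempty by blast
  show card: "card {j \<in> verts G1. i \<noteq> j \<and> {i, j} \<notin> edges G1} = card (verts G1) - 1 - k"
    if "i \<in> verts G1" for i
    using card_non_neighbours[OF assms(1) that] degree that by simp
  have "v \<in> {j \<in> verts G1. u \<noteq> j \<and> {u, j} \<notin> edges G1}" using uv by simp
  moreover have "finite {j \<in> verts G1. u \<noteq> j \<and> {u, j} \<notin> edges G1}"
    using assms(1) by (simp add: finite_simple_graph_def)
  ultimately have "0 < card {j \<in> verts G1. u \<noteq> j \<and> {u, j} \<notin> edges G1}"
    by (auto simp: card_gt_0_iff)
  then show "0 < card (verts G1) - 1 - k" using card[OF uv(1)] by simp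
  show "j \<noteq> i \<and> {j, i} \<notin> edges G1" if "i \<noteq> j \<and> {i, j} \<notin> edges G1" for i j
    using that by (auto simp: insert_commute)
qed (use assms in simp_all)

theorem mainTheorem6:
  fixes G1 G2 :: "'a graph"
  assumes "finite_simple_graph G1" and "finite_simple_graph G2"
    and "\<not> complete_graph G1" and "\<not> complete_graph G2"
    and "edges G1 \<noteq> {}" and "edges G2 \<noteq> {}"
    and "verts G1 \<inter> verts G2 = {}"
    and "regular G1"
  shows "lovasz_theta (graph_NS G1 G2) = real (card (verts G1)) + lovasz_theta G2
    \<and> lovasz_theta (graph_NNS G1 G2) = real (card (verts G1)) + lovasz_theta G2
    \<and> (real (alpha G2) = lovasz_theta G2 \<longrightarrow>
         alpha (graph_NS G1 G2) = card (verts G1) + alpha G2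
       \<and> alpha (graph_NNS G1 G2) = card (verts G1) + alpha G2)"
proof -
  obtain k where degree: "\<forall>v\<in>verts G1. degree G1 v = k"
    using assms(8) by (auto simp: regular_def)
  interpret NS: regular_split_join G1 G2 "\<lambda>u v. {u, v} \<in> edges G1" k
    using regular_split_join_neighbours[OF assms(1,2,7,5,6) degree] .
  interpret NNS: regular_split_join G1 G2 "\<lambda>u v. u \<noteq> v \<and> {u, v} \<notin> edges G1" "card (verts G1) - 1 - k"
    using regular_split_join_non_neighbours[OF assms(1,2,7,3,6) degree] .
  show ?thesis
    unfolding graph_NS_eq_split_join graph_NNS_eq_split_join
    using NS.lovasz_theta_split_join NNS.lovasz_theta_split_join NS.alpha_split_join NNS.alpha_split_join
    by simp
qed

end
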